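(* Let $\eta:\mathbb{R}^d\to\mathbb{R}$ be a twice differentiable convex function. Then $\eta$ satisfies the design condition for a general conservation law if and only if it satisfies the homogeneity property $$\mathbf{v}\cdot\frac{\partial\eta}{\partial\mathbf{v}}(\mathbf{v})=\eta(\mathbf{v})\quad\text{for all }\mathbf{v}\in\mathbb{R}^d.$$
   Context: For a smooth flux $\mathbf{f}:\mathbb{R}\to\mathbb{R}^d$ and a smooth solution $\phi$ of $\partial_t\phi+\nabla\cdot\mathbf{f}(\phi)=0$ on $\Omega\times(0,T)$, $\Omega\subset\mathbb{R}^d$, define the non-conservative term $\mathscr{A}=(\mathbf{H}_{\nabla\phi}\eta\,\nabla\phi)\cdot(\mathbf{H}_{\mathbf{x}}\phi\,\frac{\partial\mathbf{f}}{\partial\phi})$, where $\mathbf{H}_{\mathbf{x}}\phi$ is the spatial Hessian of $\phi$, $\mathbf{H}_{\nabla\phi}\eta$ is the Hessian of $\eta$ with respect to its argument evaluated at $\nabla\phi$, and $\frac{\partial\mathbf{f}}{\partial\phi}=\mathbf{f}'(\phi)$. The function $\eta$ satisfies the design condition (for a general conservation law) if $\eta$ is convex, $\eta(\mathbf{0})=0$, and $\mathscr{A}=0$ for every smooth flux $\mathbf{f}$ and every smooth solution $\phi$ of the corresponding conservation law. *)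

theory Defs
  imports "HOL-Analysis.Analysis"
begin

text \<open>Iterated directional (Frechet) derivatives:
  dderiv [h1, ..., hk] f x = partial derivative of f at x in the directions h1, ..., hk
  (innermost derivative taken first in direction hk).\<close>
fun dderiv :: "'a::real_normed_vector list \<Rightarrow> ('a \<Rightarrow> 'b::real_normed_vector) \<Rightarrow> 'a \<Rightarrow> 'b" where
  "dderiv [] f = f"
| "dderiv (h # hs) f = (\<lambda>x. frechet_derivative (dderiv hs f) (at x) h)"

definition smooth_on :: "'a::real_normed_vector set \<Rightarrow> ('a \<Rightarrow> 'b::real_normed_vector) \<Rightarrow> bool" where
  "smooth_on S f \<longleftrightarrow> (\<forall>hs. \<forall>x\<in>S. dderiv hs f differentiable (at x))"

definition twice_differentiable :: "('a::real_normed_vector \<Rightarrow> real) \<Rightarrow> bool" where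
  "twice_differentiable f \<longleftrightarrow> (\<forall>x. f differentiable (at x)) \<and> (\<forall>h x. dderiv [h] f differentiable (at x))"

definition grad :: "(real^'n \<Rightarrow> real) \<Rightarrow> real^'n \<Rightarrow> real^'n" where
  "grad g v = (\<chi> i. dderiv [axis i 1] g v)"

definition hess_mult :: "(real^'n \<Rightarrow> real) \<Rightarrow> real^'n \<Rightarrow> real^'n \<Rightarrow> real^'n" where
  "hess_mult g v w = (\<chi> i. \<Sum>j\<in>UNIV. dderiv [axis i 1, axis j 1] g v * w $ j)"

definition sgrad :: "((real^'n) \<times> real \<Rightarrow> real) \<Rightarrow> real^'n \<Rightarrow> real \<Rightarrow> real^'n" where
  "sgrad \<phi> x t = (\<chi> i. dderiv [(axis i 1, 0)] \<phi> (x, t))"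

definition shess_mult :: "((real^'n) \<times> real \<Rightarrow> real) \<Rightarrow> real^'n \<Rightarrow> real \<Rightarrow> real^'n \<Rightarrow> real^'n" where
  "shess_mult \<phi> x t w = (\<chi> i. \<Sum>j\<in>UNIV. dderiv [(axis i 1, 0), (axis j 1, 0)] \<phi> (x, t) * w $ j)"

definition solves_cons_law :: "(real \<Rightarrow> real^'n) \<Rightarrow> (real^'n) set \<Rightarrow> real \<Rightarrow> ((real^'n) \<times> real \<Rightarrow> real) \<Rightarrow> bool" where
  "solves_cons_law f \<Omega> T \<phi> \<longleftrightarrow>
     (\<forall>x\<in>\<Omega>. \<forall>t\<in>{0<..<T}.
        dderiv [(0, 1)] \<phi> (x, t) + (\<Sum>i\<in>UNIV. dderiv [(axis i 1, 0)] (\<lambda>p. f (\<phi> p) $ i) (x, t)) = 0)"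

definition ncterm :: "(real^'n \<Rightarrow> real) \<Rightarrow> (real \<Rightarrow> real^'n) \<Rightarrow> ((real^'n) \<times> real \<Rightarrow> real) \<Rightarrow> real^'n \<Rightarrow> real \<Rightarrow> real" where
  "ncterm \<eta> f \<phi> x t =
     (hess_mult \<eta> (sgrad \<phi> x t) (sgrad \<phi> x t)) \<bullet> (shess_mult \<phi> x t (dderiv [1] f (\<phi> (x, t))))"

definition design_condition :: "(real^'n \<Rightarrow> real) \<Rightarrow> bool" where
  "design_condition \<eta> \<longleftrightarrow> convex_on UNIV \<eta> \<and> \<eta> 0 = 0 \<and>
     (\<forall>(f :: real \<Rightarrow> real^'n) (\<Omega> :: (real^'n) set) (T :: real) \<phi>.
        open \<Omega> \<and> smooth_on UNIV f \<and> smooth_on (\<Omega> \<times> {0<..<T}) \<phi> \<and> solves_cons_law f \<Omega> T \<phi>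
        \<longrightarrow> (\<forall>x\<in>\<Omega>. \<forall>t\<in>{0<..<T}. ncterm \<eta> f \<phi> x t = 0))"

end

theory Submission
  imports Defs
begin

(* The Euler defect v \<bullet> \<nabla>\<eta>(v) - \<eta>(v) has derivative h \<mapsto> h \<bullet> H(v) v, so the homogeneity
   identity amounts to \<eta>(0) = 0 together with H(v) v = 0 for all v.  The non-conservative
   term is (H(p) p) \<bullet> (H_x\<phi> a) with p = \<nabla>\<phi> and a = f'(\<phi>), so H(v) v = 0 makes it vanish.
   Conversely, given p, put a = H(p) p and test the design condition with the linear flux
   f(s) = s a and the travelling quadratic \<phi>(x,t) = p \<bullet> y + |y|^2/2, y = x - t a.  It solves
   \<phi>_t + a \<bullet> \<nabla>\<phi> = 0, its spatial Hessian is the identity and its gradient is p where y = 0,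
   so there the term equals |a|^2, which must therefore vanish. *)

lemma dderiv_single_at:
  assumes "(f has_derivative f') (at x)"
  shows "dderiv [h] f x = f' h"
  using frechet_derivative_at[OF assms] by simp

lemma linear_eq_sum_axis:
  fixes f :: "real^'n \<Rightarrow> 'b::real_vector"
  assumes "linear f"
  shows "f h = (\<Sum>i\<in>UNIV. h$i *\<^sub>R f (axis i 1))"
proof -
  have "f h = f (\<Sum>i\<in>UNIV. h$i *\<^sub>R axis i 1)"
    using basis_expansion[of h] by (simp add: scalar_mult_eq_scaleR)
  also have "\<dots> = (\<Sum>i\<in>UNIV. h$i *\<^sub>R f (axis i 1))"
    using assms by (simp add: linear_sum linear_scale)
  finally show ?thesis .
qed

lemma frechet_derivative_eq_sum_axis:
  fixes f :: "real^'n \<Rightarrow> real"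
  assumes "f differentiable (at v)"
  shows "frechet_derivative f (at v) h = (\<Sum>i\<in>UNIV. h$i * dderiv [axis i 1] f v)"
proof -
  have "linear (frechet_derivative f (at v))"
    using assms frechet_derivative_works has_derivative_linear by blast
  then show ?thesis
    by (subst linear_eq_sum_axis) simp_all
qed

definition quadratic_map :: "('a::real_normed_vector \<Rightarrow> 'b::real_normed_vector) \<Rightarrow> bool" where
  "quadratic_map g \<longleftrightarrow> (\<exists>c L B. bounded_linear L \<and> bounded_bilinear B \<and> g = (\<lambda>z. c + L z + B z z))"

lemma bounded_bilinear_zero:
  "bounded_bilinear (\<lambda>(x::'a::real_normed_vector) (y::'b::real_normed_vector). 0::'c::real_normed_vector)"
  by standard (auto intro: exI[of _ 0])

lemma bounded_linear_polarization:
  assumes "bounded_bilinear B"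
  shows "bounded_linear (\<lambda>z. B z h + B h z)"
  by (intro bounded_linear_add bounded_bilinear.bounded_linear_left[OF assms]
      bounded_bilinear.bounded_linear_right[OF assms])

lemma has_derivative_quadratic:
  assumes L: "bounded_linear L" and B: "bounded_bilinear B"
  shows "((\<lambda>z. c + L z + B z z) has_derivative (\<lambda>h. L h + B z h + B h z)) (at z)"
proof -
  have "((\<lambda>z. B z z) has_derivative (\<lambda>h. B z h + B h z)) (at z)"
    using bounded_bilinear.FDERIV[OF B has_derivative_ident has_derivative_ident] by simp
  moreover have "(L has_derivative L) (at z)"
    using L bounded_linear_imp_has_derivative by blast
  ultimately show ?thesis
    by (auto intro!: derivative_eq_intros)
qed

lemma dderiv_quadratic:
  assumes "bounded_linear L" and "bounded_bilinear B"
  shows "dderiv [h] (\<lambda>z. c + L z + B z z) = (\<lambda>z. L h + B z h + B h z)"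
  using dderiv_single_at[OF has_derivative_quadratic[OF assms]] by auto

lemma dderiv2_quadratic:
  assumes L: "bounded_linear L" and B: "bounded_bilinear B"
  shows "dderiv [k, h] (\<lambda>z. c + L z + B z z) z = B k h + B h k"
proof -
  have "((\<lambda>z. L h + B z h + B h z) has_derivative (\<lambda>k. B k h + B h k)) (at z)"
    using has_derivative_add[OF has_derivative_const
        bounded_linear_imp_has_derivative[OF bounded_linear_polarization[OF B]]]
    by (simp add: add.assoc)
  moreover have "dderiv [k, h] (\<lambda>z. c + L z + B z z) = dderiv [k] (dderiv [h] (\<lambda>z. c + L z + B z z))"
    by simp
  ultimately show ?thesis
    unfolding dderiv_quadratic[OF L B] by (simp only: dderiv_single_at)
qed

lemma quadratic_map_dderiv_single:
  assumes "quadratic_map g"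
  shows "quadratic_map (dderiv [h] g)"
proof -
  obtain c L B where L: "bounded_linear L" and B: "bounded_bilinear B"
    and g: "g = (\<lambda>z. c + L z + B z z)"
    using assms unfolding quadratic_map_def by blast
  have "dderiv [h] g = (\<lambda>z. L h + (B z h + B h z) + 0)"
    unfolding g dderiv_quadratic[OF L B] by (simp add: add.assoc)
  then show ?thesis
    unfolding quadratic_map_def
    by (intro exI[where x="L h"] exI[where x="\<lambda>z. B z h + B h z"] exI[where x="\<lambda>x y. 0"]
        conjI bounded_linear_polarization[OF B] bounded_bilinear_zero) simp
qed

lemma quadratic_map_dderiv: "quadratic_map g \<Longrightarrow> quadratic_map (dderiv hs g)"
proof (induction hs)
  case Nil
  then show ?case by simp
next
  case (Cons h hs)
  have "dderiv (h # hs) g = dderiv [h] (dderiv hs g)"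
    by simp
  then show ?case
    using quadratic_map_dderiv_single[OF Cons.IH[OF Cons.prems]] by simp
qed

lemma quadratic_map_differentiable: "quadratic_map g \<Longrightarrow> g differentiable (at x)"
  unfolding quadratic_map_def differentiable_def using has_derivative_quadratic by blast

lemma quadratic_map_smooth_on: "quadratic_map g \<Longrightarrow> smooth_on S g"
  unfolding smooth_on_def using quadratic_map_dderiv quadratic_map_differentiable by blast

lemma quadratic_map_bounded_linear:
  assumes "bounded_linear L"
  shows "quadratic_map L"
proof -
  have "L = (\<lambda>z. 0 + L z + (\<lambda>x y. 0) z z)"
    by simp
  then show ?thesis
    unfolding quadratic_map_def using assms bounded_bilinear_zero by blast
qed

context
  fixes y :: "'a::real_normed_vector \<Rightarrow> 'b::real_inner"
  assumes y: "bounded_linear y"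
begin

lemma quadratic_inner_linear_eq:
  "(\<lambda>z. p \<bullet> y z + y z \<bullet> y z / 2) = (\<lambda>z. 0 + p \<bullet> y z + ((1/2) *\<^sub>R y z) \<bullet> y z)"
  by simp

lemma bounded_linear_inner_linear: "bounded_linear (\<lambda>z. p \<bullet> y z)"
  by (rule bounded_linear_compose[OF bounded_linear_inner_right y])

lemma bounded_bilinear_half_inner_linear: "bounded_bilinear (\<lambda>z w. ((1/2) *\<^sub>R y z) \<bullet> y w)"
  by (rule bounded_bilinear.comp[OF bounded_bilinear_inner
        bounded_linear_compose[OF bounded_linear_scaleR_right y] y])

lemma quadratic_map_inner_linear: "quadratic_map (\<lambda>z. p \<bullet> y z + y z \<bullet> y z / 2)"
  unfolding quadratic_map_def quadratic_inner_linear_eq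
  by (intro exI[where x=0] exI[where x="\<lambda>z. p \<bullet> y z"]
      exI[where x="\<lambda>z w. ((1/2) *\<^sub>R y z) \<bullet> y w"]
      conjI refl bounded_linear_inner_linear bounded_bilinear_half_inner_linear)

lemma has_derivative_inner_linear_quadratic:
  "((\<lambda>z. p \<bullet> y z + y z \<bullet> y z / 2) has_derivative (\<lambda>h. p \<bullet> y h + y z \<bullet> y h)) (at z)"
  using has_derivative_quadratic[OF bounded_linear_inner_linear bounded_bilinear_half_inner_linear,
      of 0 p z]
  unfolding quadratic_inner_linear_eq by (simp add: inner_commute[of "y z"] ac_simps)

lemma dderiv2_inner_linear_quadratic:
  "dderiv [k, h] (\<lambda>z. p \<bullet> y z + y z \<bullet> y z / 2) z = y k \<bullet> y h"
  unfolding quadratic_inner_linear_eq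
    dderiv2_quadratic[OF bounded_linear_inner_linear bounded_bilinear_half_inner_linear]
  by (simp add: inner_commute[of "y h"])

end

definition comoving :: "'a::real_vector \<Rightarrow> 'a \<times> real \<Rightarrow> 'a" where
  "comoving a z = fst z - snd z *\<^sub>R a"

definition travelling_quadratic :: "real^'n \<Rightarrow> real^'n \<Rightarrow> (real^'n) \<times> real \<Rightarrow> real" where
  "travelling_quadratic p a z = p \<bullet> comoving a z + comoving a z \<bullet> comoving a z / 2"

lemma bounded_linear_comoving: "bounded_linear (comoving a)"
  unfolding comoving_def[abs_def]
  by (intro bounded_linear_sub bounded_linear_fst
      bounded_linear_compose[OF bounded_linear_scaleR_left bounded_linear_snd])

lemma has_derivative_travelling_quadratic:
  "(travelling_quadratic p a has_derivative
     (\<lambda>h. p \<bullet> comoving a h + comoving a z \<bullet> comoving a h)) (at z)"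
  unfolding travelling_quadratic_def[abs_def]
  by (rule has_derivative_inner_linear_quadratic[OF bounded_linear_comoving])

lemma dderiv2_travelling_quadratic:
  "dderiv [k, h] (travelling_quadratic p a) z = comoving a k \<bullet> comoving a h"
  unfolding travelling_quadratic_def[abs_def]
  by (rule dderiv2_inner_linear_quadratic[OF bounded_linear_comoving])

lemma smooth_on_travelling_quadratic: "smooth_on S (travelling_quadratic p a)"
  unfolding travelling_quadratic_def[abs_def]
  by (intro quadratic_map_smooth_on quadratic_map_inner_linear bounded_linear_comoving)

lemma sgrad_travelling_quadratic: "sgrad (travelling_quadratic p a) x t = p + comoving a (x, t)"
  unfolding sgrad_def dderiv_single_at[OF has_derivative_travelling_quadratic]
  by (simp add: vec_eq_iff comoving_def inner_axis)

lemma shess_mult_travelling_quadratic: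
  fixes w :: "real^'n"
  shows "shess_mult (travelling_quadratic p a) x t w = w"
proof -
  have "comoving a (axis i 1, 0) \<bullet> comoving a (axis j 1, 0) * w$j = (if i = j then w$j else 0)"
    for i j :: 'n
    by (simp add: comoving_def inner_axis_axis)
  then show ?thesis
    unfolding shess_mult_def dderiv2_travelling_quadratic by (simp add: vec_eq_iff)
qed

lemma dderiv_linear_flux: "dderiv [1] (\<lambda>s. s *\<^sub>R a) s = a"
proof -
  have "((\<lambda>s. s *\<^sub>R a) has_derivative (\<lambda>s. s *\<^sub>R a)) (at s)"
    by (rule bounded_linear_imp_has_derivative[OF bounded_linear_scaleR_left])
  from dderiv_single_at[OF this] show ?thesis
    by simp
qed

lemma smooth_on_linear_flux: "smooth_on S (\<lambda>s::real. s *\<^sub>R a)"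
  by (intro quadratic_map_smooth_on quadratic_map_bounded_linear bounded_linear_scaleR_left)

lemma travelling_quadratic_solves: "solves_cons_law (\<lambda>s. s *\<^sub>R a) \<Omega> T (travelling_quadratic p a)"
  unfolding solves_cons_law_def
proof (intro ballI)
  fix x t
  let ?\<phi> = "travelling_quadratic p a" and ?y = "comoving a (x, t)"
  have "dderiv [(axis i 1, 0)] (\<lambda>q. (?\<phi> q *\<^sub>R a) $ i) (x, t) = (p$i + ?y$i) * a$i" for i
  proof -
    have "((\<lambda>q. ?\<phi> q * a$i) has_derivative
        (\<lambda>h. (p \<bullet> comoving a h + ?y \<bullet> comoving a h) * a$i)) (at (x, t))"
      by (intro has_derivative_mult_left has_derivative_travelling_quadratic)
    from dderiv_single_at[OF this] show ?thesis
      by (simp add: comoving_def inner_axis)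
  qed
  then have "(\<Sum>i\<in>UNIV. dderiv [(axis i 1, 0)] (\<lambda>q. (?\<phi> q *\<^sub>R a) $ i) (x, t)) = (p + ?y) \<bullet> a"
    by (simp add: inner_vec_def)
  moreover have "dderiv [(0, 1)] ?\<phi> (x, t) = - ((p + ?y) \<bullet> a)"
    unfolding dderiv_single_at[OF has_derivative_travelling_quadratic]
    by (simp add: comoving_def algebra_simps)
  ultimately show "dderiv [(0, 1)] ?\<phi> (x, t)
      + (\<Sum>i\<in>UNIV. dderiv [(axis i 1, 0)] (\<lambda>q. (?\<phi> q *\<^sub>R a) $ i) (x, t)) = 0"
    by simp
qed

lemma design_conditionD:
  assumes "design_condition \<eta>" and "open \<Omega>" and "smooth_on UNIV f"
    and "smooth_on (\<Omega> \<times> {0<..<T}) \<phi>" and "solves_cons_law f \<Omega> T \<phi>"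
    and "x \<in> \<Omega>" and "t \<in> {0<..<T}"
  shows "ncterm \<eta> f \<phi> x t = 0"
  using assms unfolding design_condition_def by blast

lemma design_condition_imp_hess_mult_self_zero:
  assumes "design_condition \<eta>"
  shows "hess_mult \<eta> p p = 0"
proof -
  define a where "a = hess_mult \<eta> p p"
  define x0 where "x0 = (1/2::real) *\<^sub>R a"
  have "comoving a (x0, 1/2) = 0"
    by (simp add: comoving_def x0_def)
  then have "ncterm \<eta> (\<lambda>s. s *\<^sub>R a) (travelling_quadratic p a) x0 (1/2) = a \<bullet> a"
    unfolding ncterm_def sgrad_travelling_quadratic shess_mult_travelling_quadratic dderiv_linear_flux
    by (simp add: a_def)
  moreover have "ncterm \<eta> (\<lambda>s. s *\<^sub>R a) (travelling_quadratic p a) x0 (1/2) = 0"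
    by (rule design_conditionD[where T=1, OF assms open_UNIV smooth_on_linear_flux
          smooth_on_travelling_quadratic travelling_quadratic_solves]) auto
  ultimately show ?thesis
    by (simp add: a_def)
qed

lemma design_condition_iff_hess_mult_self_zero:
  "design_condition \<eta> \<longleftrightarrow> convex_on UNIV \<eta> \<and> \<eta> 0 = 0 \<and> (\<forall>v. hess_mult \<eta> v v = 0)"
proof
  assume "design_condition \<eta>"
  then show "convex_on UNIV \<eta> \<and> \<eta> 0 = 0 \<and> (\<forall>v. hess_mult \<eta> v v = 0)"
    using design_condition_imp_hess_mult_self_zero unfolding design_condition_def by blast
next
  assume "convex_on UNIV \<eta> \<and> \<eta> 0 = 0 \<and> (\<forall>v. hess_mult \<eta> v v = 0)"
  then show "design_condition \<eta>"
    unfolding design_condition_def ncterm_def by simp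
qed

lemma has_derivative_euler_defect:
  fixes \<eta> :: "real^'n \<Rightarrow> real"
  assumes "twice_differentiable \<eta>"
  shows "((\<lambda>v. v \<bullet> grad \<eta> v - \<eta> v) has_derivative (\<lambda>h. h \<bullet> hess_mult \<eta> v v)) (at v)"
proof -
  define d where "d j = dderiv [axis j 1] \<eta>" for j
  have d_diff: "d j differentiable (at v)" for j
    using assms unfolding twice_differentiable_def d_def by blast
  have \<eta>_diff: "\<eta> differentiable (at v)"
    using assms unfolding twice_differentiable_def by blast
  have "((\<lambda>v. (\<Sum>j\<in>UNIV. v$j * d j v) - \<eta> v) has_derivative
      (\<lambda>h. (\<Sum>j\<in>UNIV. v$j * frechet_derivative (d j) (at v) h + h$j * d j v)
           - frechet_derivative \<eta> (at v) h)) (at v)"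
    by (intro has_derivative_diff has_derivative_sum has_derivative_mult
        bounded_linear_imp_has_derivative[OF bounded_linear_vec_nth]
        d_diff[unfolded frechet_derivative_works] \<eta>_diff[unfolded frechet_derivative_works])
  moreover have "(\<Sum>j\<in>UNIV. v$j * frechet_derivative (d j) (at v) h + h$j * d j v)
      - frechet_derivative \<eta> (at v) h = h \<bullet> hess_mult \<eta> v v" for h
  proof -
    have second_partials: "frechet_derivative (d j) (at v) h = (\<Sum>i\<in>UNIV. h$i * dderiv [axis i 1, axis j 1] \<eta> v)"
      for j
      using frechet_derivative_eq_sum_axis[OF d_diff, of j h] by (simp add: d_def)
    have "(\<Sum>j\<in>UNIV. v$j * frechet_derivative (d j) (at v) h + h$j * d j v)
        - frechet_derivative \<eta> (at v) h = (\<Sum>j\<in>UNIV. v$j * frechet_derivative (d j) (at v) h)"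
      unfolding frechet_derivative_eq_sum_axis[OF \<eta>_diff] d_def by (simp only: sum.distrib)
    also have "\<dots> = (\<Sum>j\<in>UNIV. \<Sum>i\<in>UNIV. h$i * (dderiv [axis i 1, axis j 1] \<eta> v * v$j))"
      unfolding second_partials by (simp add: sum_distrib_left mult_ac)
    also have "\<dots> = (\<Sum>i\<in>UNIV. \<Sum>j\<in>UNIV. h$i * (dderiv [axis i 1, axis j 1] \<eta> v * v$j))"
      by (rule sum.swap)
    also have "\<dots> = h \<bullet> hess_mult \<eta> v v"
      by (simp add: inner_vec_def hess_mult_def sum_distrib_left)
    finally show ?thesis .
  qed
  moreover have "(\<lambda>v. v \<bullet> grad \<eta> v - \<eta> v) = (\<lambda>v. (\<Sum>j\<in>UNIV. v$j * d j v) - \<eta> v)"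
    by (simp add: inner_vec_def grad_def d_def)
  ultimately show ?thesis
    by simp
qed

lemma euler_identity_iff_hess_mult_self_zero:
  fixes \<eta> :: "real^'n \<Rightarrow> real"
  assumes "twice_differentiable \<eta>"
  shows "(\<forall>v. v \<bullet> grad \<eta> v = \<eta> v) \<longleftrightarrow> \<eta> 0 = 0 \<and> (\<forall>v. hess_mult \<eta> v v = 0)"
proof
  assume euler: "\<forall>v. v \<bullet> grad \<eta> v = \<eta> v"
  have "hess_mult \<eta> v v = 0" for v
  proof -
    have "((\<lambda>v. v \<bullet> grad \<eta> v - \<eta> v) has_derivative (\<lambda>h. 0)) (at v)"
      using euler by simp
    with has_derivative_euler_defect[OF assms]
    have "(\<lambda>h. h \<bullet> hess_mult \<eta> v v) = (\<lambda>h. 0)"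
      by (rule has_derivative_unique)
    then have "hess_mult \<eta> v v \<bullet> hess_mult \<eta> v v = 0"
      by (rule fun_cong)
    then show ?thesis
      by simp
  qed
  moreover have "\<eta> 0 = 0"
    using euler by (metis inner_zero_left)
  ultimately show "\<eta> 0 = 0 \<and> (\<forall>v. hess_mult \<eta> v v = 0)"
    by blast
next
  assume hess: "\<eta> 0 = 0 \<and> (\<forall>v. hess_mult \<eta> v v = 0)"
  then have "((\<lambda>v. v \<bullet> grad \<eta> v - \<eta> v) has_derivative (\<lambda>h. 0)) (at v within UNIV)" for v
    using has_derivative_euler_defect[OF assms, of v] by simp
  then have "\<exists>c. \<forall>v\<in>UNIV. v \<bullet> grad \<eta> v - \<eta> v = c"
    by (rule has_derivative_zero_constant[OF convex_UNIV])
  then obtain c where c: "\<And>v. v \<bullet> grad \<eta> v - \<eta> v = c"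
    by blast
  moreover have "c = 0"
    using c[of 0] hess by simp
  ultimately show "\<forall>v. v \<bullet> grad \<eta> v = \<eta> v"
    by simp
qed

theorem lemma2:
  fixes \<eta> :: "real^'n \<Rightarrow> real"
  assumes "twice_differentiable \<eta>"
    and "convex_on UNIV \<eta>"
  shows "design_condition \<eta> \<longleftrightarrow> (\<forall>v. v \<bullet> grad \<eta> v = \<eta> v)"
  by (simp add: design_condition_iff_hess_mult_self_zero
      euler_identity_iff_hess_mult_self_zero[OF assms(1)] assms(2))

end
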